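(* For every even integer $g\geqslant2$, the ideal $J_g^-\subset\mathbb{C}[\alpha,\gamma]$ is generated by $\zeta_g^-$ together with $\gamma J_{g-2}^-$. Moreover, $\gamma^i\zeta^-_{g-2i}\in J_g^-$ for all integers $i\geqslant0$.
   Context: Let $\zeta_k\in\mathbb{C}[\alpha,\beta,\gamma]$ be defined by $\zeta_i=0$ for $i<0$, $\zeta_0=1$, $\zeta_{k+1}=\alpha\zeta_k+k^2(\beta+(-1)^k8)\zeta_{k-1}+2k(k-1)\gamma\zeta_{k-2}$ ($k\geqslant0$). Let $\zeta_k^\pm\in\mathbb{C}[\alpha,\gamma]$ be obtained by setting $\beta=\pm8$ in $\zeta_k$, and $J_k^\pm=(\zeta^\pm_k,\zeta^\pm_{k+1},\zeta^\pm_{k+2})\subset\mathbb{C}[\alpha,\gamma]$. Explicitly $\zeta^-_{k+1}=\alpha\zeta^-_k-16k^2\zeta^-_{k-1}+2k(k-1)\gamma\zeta^-_{k-2}$ for $k$ odd and $\zeta^-_{k+1}=\alpha\zeta^-_k+2k(k-1)\gamma\zeta^-_{k-2}$ for $k$ even. *)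

theory Defs
  imports "HOL-Computational_Algebra.Polynomial" Complex_Main
begin

text \<open>The ring C[alpha,gamma] is modelled as (C[alpha])[gamma], i.e. complex poly poly:
  the outer polynomial variable is gamma, the inner one is alpha.\<close>

type_synonym cpoly2 = "complex poly poly"

definition alphaP :: cpoly2 where "alphaP = [:[:0, 1:]:]"
definition gammaP :: cpoly2 where "gammaP = [:0, 1:]"

definition ideal_gen :: "'a::comm_ring_1 set \<Rightarrow> 'a set" where
  "ideal_gen S = {(\<Sum>s\<in>t. r s * s) | t r. finite t \<and> t \<subseteq> S}"

text \<open>zeta k for k >= 0, with parameters a = alpha, b = beta, c = gamma.
  Recurrence zeta(k+1) = a zeta(k) + k^2 (b + (-1)^k 8) zeta(k-1) + 2k(k-1) c zeta(k-2),
  zeta_i = 0 for i < 0, zeta_0 = 1 (the cases k = 0, 1 are written out since the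
  terms with negative index vanish).\<close>
fun zeta :: "'a::comm_ring_1 \<Rightarrow> 'a \<Rightarrow> 'a \<Rightarrow> nat \<Rightarrow> 'a" where
  "zeta a b c 0 = 1"
| "zeta a b c (Suc 0) = a * zeta a b c 0"
| "zeta a b c (Suc (Suc 0)) = a * zeta a b c 1 + of_nat (1^2) * (b + (-1)^1 * 8) * zeta a b c 0"
| "zeta a b c (Suc (Suc (Suc k))) =
     a * zeta a b c (k + 2)
     + of_nat ((k + 2)^2) * (b + (-1)^(k + 2) * 8) * zeta a b c (k + 1)
     + of_nat (2 * (k + 2) * (k + 1)) * c * zeta a b c k"

definition zetaZ :: "'a::comm_ring_1 \<Rightarrow> 'a \<Rightarrow> 'a \<Rightarrow> int \<Rightarrow> 'a" where
  "zetaZ a b c n = (if n < 0 then 0 else zeta a b c (nat n))"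

definition zeta_minus :: "int \<Rightarrow> cpoly2" where
  "zeta_minus n = zetaZ alphaP (-8) gammaP n"

definition J_minus :: "int \<Rightarrow> cpoly2 set" where
  "J_minus k = ideal_gen {zeta_minus k, zeta_minus (k + 1), zeta_minus (k + 2)}"

end

theory Submission
  imports Defs
begin

text \<open>At \<open>\<beta> = -8\<close> the middle coefficient \<open>\<beta> + 8(-1)\<^sup>k\<close> of the recurrence vanishes for
  even \<open>k\<close> and equals \<open>-16\<close> for odd \<open>k\<close>. Hence, for even \<open>k \<ge> 2\<close>,
  \<open>\<zeta>(k+1) = \<alpha> \<zeta>(k) + 2k(k-1) \<gamma> \<zeta>(k-2)\<close> and
  \<open>\<zeta>(k+2) = \<alpha> \<zeta>(k+1) - 16(k+1)\<^sup>2 \<zeta>(k) + 2(k+1)k \<gamma> \<zeta>(k-1)\<close>.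
  Read forwards, these put \<open>\<zeta>(k+1)\<close> and \<open>\<zeta>(k+2)\<close> into the ideal generated by \<open>\<zeta>(k)\<close>
  and \<open>\<gamma> J(k-2)\<close>. Solved for the \<open>\<gamma>\<close>-terms, whose coefficients are nonzero integers and
  hence units of \<open>\<complex>[\<alpha>,\<gamma>]\<close>, they give \<open>\<gamma> J(k-2) \<subseteq> J(k)\<close>; iterating this inclusion
  yields \<open>\<gamma>\<^sup>i \<zeta>(k-2i) \<in> J(k)\<close>.\<close>

declare zeta.simps [simp del]

lemma zeta_neg8_odd:
  "zeta a (-8) c (2*m+3) =
     a * zeta a (-8) c (2*m+2) + of_nat (2*(2*m+2)*(2*m+1)) * (c * zeta a (-8) c (2*m))"
proof -
  have "2*m+3 = Suc (Suc (Suc (2*m)))" by simp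
  then have "zeta a (-8) c (2*m+3) = a * zeta a (-8) c (2*m+2)
      + of_nat ((2*m+2)^2) * (-8 + (-1)^(2*m+2) * 8) * zeta a (-8) c (2*m+1)
      + of_nat (2*(2*m+2)*(2*m+1)) * c * zeta a (-8) c (2*m)"
    by (simp only: zeta.simps(4))
  moreover have "(-1::'a) ^ (2*m+2) = 1" by simp
  ultimately show ?thesis
    by (simp only: mult.assoc mult_1 left_minus mult_zero_right mult_zero_left add_0_right)
qed

lemma zeta_neg8_even:
  "zeta a (-8) c (2*m+4) =
     a * zeta a (-8) c (2*m+3) - of_nat (16*(2*m+3)^2) * zeta a (-8) c (2*m+2)
     + of_nat (2*(2*m+3)*(2*m+2)) * (c * zeta a (-8) c (2*m+1))"
proof -
  have "2*m+4 = Suc (Suc (Suc (2*m+1)))" "2*m+1+2 = 2*m+3" "2*m+1+1 = 2*m+2" by simp_all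
  then have "zeta a (-8) c (2*m+4) = a * zeta a (-8) c (2*m+3)
      + of_nat ((2*m+3)^2) * (-8 + (-1)^(2*m+3) * 8) * zeta a (-8) c (2*m+2)
      + of_nat (2*(2*m+3)*(2*m+2)) * c * zeta a (-8) c (2*m+1)"
    by (simp only: zeta.simps(4))
  moreover have "(-1::'a) ^ (2*m+3) = -1" by simp
  moreover have "of_nat (n::nat) * (-8 + -1 * 8) * z = - (of_nat (16*n) * (z::'a))" for n z
    by (simp add: algebra_simps)
  ultimately show ?thesis
    by (simp only: mult.assoc[of _ c] diff_conv_add_uminus)
qed

interpretation self_module: module "(*) :: 'a::comm_ring_1 \<Rightarrow> 'a \<Rightarrow> 'a"
  by unfold_locales (auto simp: algebra_simps)

lemma ideal_gen_eq_span: "ideal_gen S = self_module.span S"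
  unfolding ideal_gen_def self_module.span_explicit by simp

lemma span_mult_image:
  "self_module.span ((\<lambda>x. c * x) ` S) = (\<lambda>x. c * x) ` self_module.span S"
  using module_hom.span_image[OF self_module.module_hom_scale_self] .

lemma span_cancel_unit:
  assumes "is_unit u" and "u * x \<in> self_module.span S"
  shows "x \<in> self_module.span S"
proof -
  from assms(1) obtain v where "1 = u * v" by (rule dvdE)
  then have "x = v * (u * x)" by (simp add: mult.assoc[symmetric] mult.commute[of v])
  also have "\<dots> \<in> self_module.span S" by (rule self_module.span_scale[OF assms(2)])
  finally show ?thesis .
qed

lemma is_unit_of_nat_poly_poly:
  "n \<noteq> 0 \<Longrightarrow> is_unit (of_nat n :: 'a::field_char_0 poly poly)"
proof -
  assume "n \<noteq> 0"
  then have "is_unit [:[:of_nat n :: 'a:]:]"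
    unfolding is_unit_const_poly_iff by (simp add: dvd_field_iff)
  then show ?thesis by (simp only: of_nat_poly)
qed

abbreviation zeta_minus_nat :: "nat \<Rightarrow> cpoly2" where
  "zeta_minus_nat n \<equiv> zeta alphaP (-8) gammaP n"

lemma zeta_minus_of_nat: "zeta_minus (int n) = zeta_minus_nat n"
  by (simp add: zeta_minus_def zetaZ_def)

lemma J_minus_of_nat:
  "J_minus (int n) =
     self_module.span {zeta_minus_nat n, zeta_minus_nat (n+1), zeta_minus_nat (n+2)}"
  using zeta_minus_of_nat[of "n+1"] zeta_minus_of_nat[of "n+2"]
  by (simp add: J_minus_def ideal_gen_eq_span zeta_minus_of_nat add_ac)

lemma J_minus_of_nat_add_2:
  "J_minus (int (n+2)) =
     self_module.span {zeta_minus_nat (n+2), zeta_minus_nat (n+3), zeta_minus_nat (n+4)}"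
proof -
  have "n+2+1 = n+3" "n+2+2 = n+4" by simp_all
  then show ?thesis by (simp only: J_minus_of_nat)
qed

lemma gamma_mult_J_minus_subset:
  "(\<lambda>x. gammaP * x) ` J_minus (int (2*m)) \<subseteq> J_minus (int (2*m+2))"
proof -
  let ?T = "self_module.span
    {zeta_minus_nat (2*m+2), zeta_minus_nat (2*m+3), zeta_minus_nat (2*m+4)}"
  have gens: "zeta_minus_nat (2*m+2) \<in> ?T" "zeta_minus_nat (2*m+3) \<in> ?T"
    "zeta_minus_nat (2*m+4) \<in> ?T"
    by (simp_all add: self_module.span_base)
  have "gammaP * zeta_minus_nat (2*m) \<in> ?T"
  proof (rule span_cancel_unit[where u = "of_nat (2*(2*m+2)*(2*m+1))"])
    show "is_unit (of_nat (2*(2*m+2)*(2*m+1)) :: cpoly2)"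
      by (rule is_unit_of_nat_poly_poly) simp
    have "of_nat (2*(2*m+2)*(2*m+1)) * (gammaP * zeta_minus_nat (2*m))
        = zeta_minus_nat (2*m+3) - alphaP * zeta_minus_nat (2*m+2)"
      unfolding zeta_neg8_odd by (rule add_diff_cancel_left'[symmetric])
    also have "\<dots> \<in> ?T"
      by (intro self_module.span_diff self_module.span_scale gens)
    finally show "of_nat (2*(2*m+2)*(2*m+1)) * (gammaP * zeta_minus_nat (2*m)) \<in> ?T" .
  qed
  moreover have "gammaP * zeta_minus_nat (2*m+1) \<in> ?T"
  proof (rule span_cancel_unit[where u = "of_nat (2*(2*m+3)*(2*m+2))"])
    show "is_unit (of_nat (2*(2*m+3)*(2*m+2)) :: cpoly2)"
      by (rule is_unit_of_nat_poly_poly) simp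
    have cancel: "x = p - q + x - p + q" for p q x :: cpoly2
      by simp
    have "of_nat (2*(2*m+3)*(2*m+2)) * (gammaP * zeta_minus_nat (2*m+1))
        = zeta_minus_nat (2*m+4) - alphaP * zeta_minus_nat (2*m+3)
          + of_nat (16*(2*m+3)^2) * zeta_minus_nat (2*m+2)"
      unfolding zeta_neg8_even by (rule cancel)
    also have "\<dots> \<in> ?T"
      by (intro self_module.span_add self_module.span_diff self_module.span_scale gens)
    finally show "of_nat (2*(2*m+3)*(2*m+2)) * (gammaP * zeta_minus_nat (2*m+1)) \<in> ?T" .
  qed
  moreover have "gammaP * zeta_minus_nat (2*m+2) \<in> ?T"
    by (intro self_module.span_scale gens)
  ultimately have "self_module.span ((\<lambda>x. gammaP * x) `
      {zeta_minus_nat (2*m), zeta_minus_nat (2*m+1), zeta_minus_nat (2*m+2)}) \<subseteq> ?T"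
    by (intro self_module.span_minimal self_module.subspace_span) auto
  then show ?thesis
    unfolding J_minus_of_nat_add_2 unfolding J_minus_of_nat span_mult_image .
qed

lemma J_minus_eq_ideal_gen_insert_gamma:
  "J_minus (int (2*m+2)) =
     ideal_gen (insert (zeta_minus_nat (2*m+2)) ((\<lambda>x. gammaP * x) ` J_minus (int (2*m))))"
  (is "_ = ideal_gen ?S")
proof -
  have gamma_mult: "gammaP * x \<in> self_module.span ?S" if "x \<in> J_minus (int (2*m))" for x
    using that by (intro self_module.span_base insertI2 imageI)
  have lower: "zeta_minus_nat (2*m) \<in> J_minus (int (2*m))"
    "zeta_minus_nat (2*m+1) \<in> J_minus (int (2*m))"
    unfolding J_minus_of_nat by (simp_all add: self_module.span_base)
  have zeta_base: "zeta_minus_nat (2*m+2) \<in> self_module.span ?S"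
    by (simp add: self_module.span_base)
  have zeta_next: "zeta_minus_nat (2*m+3) \<in> self_module.span ?S"
    unfolding zeta_neg8_odd
    by (intro self_module.span_add self_module.span_scale zeta_base gamma_mult lower)
  have "zeta_minus_nat (2*m+4) \<in> self_module.span ?S"
    unfolding zeta_neg8_even
    by (intro self_module.span_add self_module.span_diff self_module.span_scale
        zeta_base zeta_next gamma_mult lower)
  moreover have "?S \<subseteq> J_minus (int (2*m+2))"
    using gamma_mult_J_minus_subset[of m] unfolding J_minus_of_nat_add_2
    by (auto intro: self_module.span_base)
  ultimately show ?thesis
    unfolding ideal_gen_eq_span J_minus_of_nat_add_2 self_module.span_eq
    using zeta_base zeta_next by auto
qed

lemma gamma_power_mult_zeta_minus_in_J_minus:
  "i \<le> m \<Longrightarrow> gammaP ^ i * zeta_minus_nat (2*(m-i)) \<in> J_minus (int (2*m))"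
proof (induction i arbitrary: m)
  case 0
  show ?case unfolding J_minus_of_nat by (simp add: self_module.span_base)
next
  case (Suc i)
  then obtain m' where m: "m = Suc m'" and "i \<le> m'"
    by (cases m) auto
  then have "gammaP * (gammaP ^ i * zeta_minus_nat (2*(m'-i))) \<in> J_minus (int (2*m'+2))"
    using gamma_mult_J_minus_subset Suc.IH by blast
  moreover have "2*m'+2 = 2*m" "2*(m'-i) = 2*(m - Suc i)"
    using m by simp_all
  ultimately show ?case by (simp only: power_Suc mult.assoc)
qed

theorem lemma5p1:
  fixes g :: int
  assumes "even g" and "g \<ge> 2"
  shows "J_minus g = ideal_gen (insert (zeta_minus g) ((\<lambda>x. gammaP * x) ` J_minus (g - 2))) \<and>
         (\<forall>i::int. i \<ge> 0 \<longrightarrow> gammaP ^ nat i * zeta_minus (g - 2 * i) \<in> J_minus g)"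
proof -
  obtain m :: nat where g: "g = int (2*m+2)"
  proof -
    from assms(1) obtain k where k: "g = 2*k" by (rule evenE)
    with assms(2) have "k \<ge> 1" by simp
    with k show ?thesis using that[of "nat (k-1)"] by simp
  qed
  have "int (2*m+2) - 2 = int (2*m)" by simp
  then have "J_minus g = ideal_gen (insert (zeta_minus g) ((\<lambda>x. gammaP * x) ` J_minus (g - 2)))"
    unfolding g zeta_minus_of_nat by (simp only: J_minus_eq_ideal_gen_insert_gamma)
  moreover have "gammaP ^ nat i * zeta_minus (g - 2*i) \<in> J_minus g" if "i \<ge> 0" for i
  proof (cases "nat i \<le> m + 1")
    case True
    have "g - 2*i = int (2*(m+1 - nat i))" and "g = int (2*(m+1))"
      using g that True by simp_all
    with gamma_power_mult_zeta_minus_in_J_minus[OF True] show ?thesis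
      by (simp only: zeta_minus_of_nat)
  next
    case False
    then have "g - 2*i < 0" using g by simp
    then have "zeta_minus (g - 2*i) = 0" by (simp add: zeta_minus_def zetaZ_def)
    then show ?thesis
      unfolding J_minus_def ideal_gen_eq_span by (simp only: mult_zero_right self_module.span_zero)
  qed
  ultimately show ?thesis by blast
qed

end
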